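(* Let $\phi:\mathcal{F}\to\mathbb{R}$ be any function, $\delta\in(0,1)$, $\epsilon_4:=2B_{\text{ref}}\sqrt{\frac{\log(\delta^{-1})}{2n}}$, $\hat a_-(\epsilon_4):=\min_{f\in\hat{\mathcal{R}}(\epsilon_4)}\phi(f)$ and $\hat a_+(\epsilon_4):=\max_{f\in\hat{\mathcal{R}}(\epsilon_4)}\phi(f)$. Let $f_1\in\mathcal{R}(0)$ be a fixed (not data dependent) model with $|L(f_1,z)-L(f_{\text{ref}},z)|\le B_{\text{ref}}$ for all $z\in\mathcal{Z}$. Then $\mathbb{P}\{\phi(f_1)\in[\hat a_-(\epsilon_4),\hat a_+(\epsilon_4)]\}\ge1-\delta$.
   Context: Let $Z$ be a random variable on $\mathcal{Z}$; $\mathcal{F}$ a set of prediction models; $L:\mathcal{F}\times\mathcal{Z}\to\mathbb{R}_{\ge0}$ a nonnegative loss; data are $n\ge2$ i.i.d. copies $Z_1,\dots,Z_n$ of $Z$. A reference model $f_{\text{ref}}\in\mathcal{F}$ is fixed in advance. $\mathcal{R}(\epsilon)=\{f_{\text{ref}}\}\cup\{f\in\mathcal{F}:\mathbb{E}L(f,Z)\le\mathbb{E}L(f_{\text{ref}},Z)+\epsilon\}$ and $\hat{\mathcal{R}}(\epsilon)=\{f_{\text{ref}}\}\cup\{f\in\mathcal{F}:\frac1n\sum_iL(f,Z_i)\le\frac1n\sum_iL(f_{\text{ref}},Z_i)+\epsilon\}$. The extrema of $\phi$ over $\hat{\mathcal{R}}(\epsilon_4)$ are assumed to be attained. *)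

theory Defs
  imports "HOL-Probability.Probability"
begin

definition Rset :: "'f set \<Rightarrow> ('f \<Rightarrow> 'z \<Rightarrow> real) \<Rightarrow> 'z measure \<Rightarrow> 'f \<Rightarrow> real \<Rightarrow> 'f set" where
  "Rset F L P fref eps = {fref} \<union>
     {f \<in> F. (\<integral>z. L f z \<partial>P) \<le> (\<integral>z. L fref z \<partial>P) + eps}"

definition Rhat :: "'f set \<Rightarrow> ('f \<Rightarrow> 'z \<Rightarrow> real) \<Rightarrow> nat \<Rightarrow> (nat \<Rightarrow> 'z) \<Rightarrow> 'f \<Rightarrow> real \<Rightarrow> 'f set" where
  "Rhat F L n zs fref eps = {fref} \<union>
     {f \<in> F. (\<Sum>i<n. L f (zs i)) / real n \<le> (\<Sum>i<n. L fref (zs i)) / real n + eps}"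

end

theory Submission
  imports Defs
begin

text \<open>The empirical mean of the loss differences \<open>L(f\<^sub>1, Z\<^sub>i) - L(f\<^sub>ref, Z\<^sub>i)\<close> is a mean of \<open>n\<close>
  independent variables in \<open>[-B\<^sub>ref, B\<^sub>ref]\<close> whose expectation is nonpositive because
  \<open>f\<^sub>1 \<in> R(0)\<close>. By Hoeffding's inequality it exceeds \<open>\<epsilon>\<^sub>4\<close> with probability at most \<open>\<delta>\<close>.
  Otherwise \<open>f\<^sub>1\<close> belongs to the empirical Rashomon set of level \<open>\<epsilon>\<^sub>4\<close>, so \<open>\<phi>(f\<^sub>1)\<close> lies between
  the minimum and the maximum of \<open>\<phi>\<close> over that set.\<close>

lemma Hoeffding_exponent_level:
  fixes n :: nat and B \<delta> :: real
  assumes "n > 0" "B > 0" "0 < \<delta>" "\<delta> \<le> 1"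
  shows "exp (-2 * (real n * (2 * B * sqrt (ln (1 / \<delta>) / (2 * real n))))\<^sup>2
                / (real n * (2 * B)\<^sup>2)) = \<delta>"
proof -
  have "(sqrt (ln (1 / \<delta>) / (2 * real n)))\<^sup>2 = ln (1 / \<delta>) / (2 * real n)"
    using assms by simp
  then have "-2 * (real n * (2 * B * sqrt (ln (1 / \<delta>) / (2 * real n))))\<^sup>2
                / (real n * (2 * B)\<^sup>2) = ln \<delta>"
    using assms by (simp add: power_mult_distrib field_simps ln_div power2_eq_square)
  then show ?thesis using assms by simp
qed

lemma (in prob_space) prob_sum_gt_Hoeffding_level:
  fixes X :: "'i \<Rightarrow> 'a \<Rightarrow> real" and B \<delta> :: real
  assumes "finite I" "I \<noteq> {}"
    and indep: "indep_vars (\<lambda>_. borel) X I"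
    and bounded: "\<And>i. i \<in> I \<Longrightarrow> AE x in M. X i x \<in> {- B..B}"
    and centred: "\<And>i. i \<in> I \<Longrightarrow> expectation (X i) \<le> 0"
    and "B \<ge> 0" "0 < \<delta>" "\<delta> \<le> 1"
  shows "prob {x \<in> space M. (\<Sum>i\<in>I. X i x) >
           real (card I) * (2 * B * sqrt (ln (1 / \<delta>) / (2 * real (card I))))} \<le> \<delta>"
    (is "prob {x \<in> space M. _ > ?t} \<le> _")
proof (cases "B = 0")
  case True
  have "AE x in M. \<forall>i\<in>I. X i x = 0"
    using bounded True by (intro AE_finite_allI[OF \<open>finite I\<close>]) auto
  then have "AE x in M. \<not> (\<Sum>i\<in>I. X i x) > ?t"
    by (rule AE_mp) (use True in auto)
  then have "prob {x \<in> space M. (\<Sum>i\<in>I. X i x) > ?t} = 0"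
    by (simp add: measure_def emeasure_eq_0_AE)
  then show ?thesis using \<open>0 < \<delta>\<close> by simp
next
  case False
  interpret Hoeffding_ineq M I X "\<lambda>_. - B" "\<lambda>_. B" "\<Sum>i\<in>I. expectation (X i)"
    by unfold_locales (use assms in auto)
  have n: "card I > 0" using assms by (simp add: card_gt_0_iff)
  have "prob {x \<in> space M. (\<Sum>i\<in>I. X i x) > ?t}
        \<le> prob {x \<in> space M. (\<Sum>i\<in>I. X i x) \<ge> (\<Sum>i\<in>I. expectation (X i)) + ?t}"
    using centred sum_nonpos[of I "\<lambda>i. expectation (X i)"]
    by (intro finite_measure_mono) auto
  also have "\<dots> \<le> exp (-2 * ?t\<^sup>2 / (\<Sum>i\<in>I. (B - - B)\<^sup>2))"
    using False \<open>B \<ge> 0\<close> n assms by (intro Hoeffding_ineq_ge) auto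
  also have "\<dots> = \<delta>"
    using Hoeffding_exponent_level[of "card I" B \<delta>] False assms n by simp
  finally show ?thesis .
qed

lemma (in prob_space) prob_sum_diff_gt_Hoeffding_level:
  fixes Z :: "nat \<Rightarrow> 'a \<Rightarrow> 'z" and u v :: "'z \<Rightarrow> real" and B \<delta> :: real
  assumes "n > 0"
    and rv: "\<And>i. i < n \<Longrightarrow> Z i \<in> measurable M S"
    and indep: "indep_vars (\<lambda>_. S) Z {..<n}"
    and ident: "\<And>i. i < n \<Longrightarrow> distr M S (Z i) = P"
    and meas: "u \<in> borel_measurable S" "v \<in> borel_measurable S"
    and int: "integrable P u" "integrable P v"
    and mean_le: "(\<integral>z. u z \<partial>P) \<le> (\<integral>z. v z \<partial>P)"
    and bound: "\<And>z. z \<in> space S \<Longrightarrow> \<bar>u z - v z\<bar> \<le> B"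
    and "0 < \<delta>" "\<delta> \<le> 1"
  shows "prob {w \<in> space M. (\<Sum>i<n. u (Z i w) - v (Z i w)) >
           real n * (2 * B * sqrt (ln (1 / \<delta>) / (2 * real n)))} \<le> \<delta>"
proof -
  define X where "X i w = u (Z i w) - v (Z i w)" for i w
  have X_bounded: "X i w \<in> {- B..B}" if "i < n" "w \<in> space M" for i w
    using bound[OF measurable_space[OF rv[OF that(1)] that(2)]] by (simp add: X_def abs_le_iff)
  obtain w0 where "w0 \<in> space M" using not_empty by blast
  then have "B \<ge> 0" using X_bounded[of 0 w0] \<open>n > 0\<close> by auto
  moreover have "indep_vars (\<lambda>_. borel) X {..<n}"
    unfolding X_def by (rule indep_vars_compose2[OF indep]) (use meas in measurable)
  moreover have "AE w in M. X i w \<in> {- B..B}" if "i \<in> {..<n}" for i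
    using X_bounded that by (intro AE_I2) auto
  moreover have "expectation (X i) \<le> 0" if "i \<in> {..<n}" for i
  proof -
    from that have i: "i < n" by simp
    have "expectation (X i) = (\<integral>z. u z - v z \<partial>P)"
      unfolding X_def ident[OF i, symmetric]
      by (rule integral_distr[symmetric]) (use rv[OF i] meas in measurable)
    then show ?thesis using int mean_le by simp
  qed
  moreover have "{..<n} \<noteq> {}" using \<open>n > 0\<close> by auto
  ultimately show ?thesis
    using prob_sum_gt_Hoeffding_level[of "{..<n}" X B \<delta>] assms by (simp add: X_def)
qed

lemma Rset_zero_integral_le:
  "f \<in> Rset F L P fref 0 \<Longrightarrow> (\<integral>z. L f z \<partial>P) \<le> (\<integral>z. L fref z \<partial>P)"
  by (auto simp: Rset_def)

lemma Rhat_memI: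
  assumes "n > 0" "f \<in> F" "(\<Sum>i<n. L f (zs i) - L fref (zs i)) \<le> real n * e"
  shows "f \<in> Rhat F L n zs fref e"
proof -
  have "(\<Sum>i<n. L f (zs i)) / real n \<le> (\<Sum>i<n. L fref (zs i)) / real n + e"
    using assms by (simp add: sum_subtractf field_simps)
  then show ?thesis using assms(2) by (simp add: Rhat_def)
qed

lemma image_Inf_Sup_memI:
  fixes \<phi> :: "'a \<Rightarrow> 'b::conditionally_complete_lattice"
  assumes "x \<in> A" "\<exists>a\<in>A. \<forall>g\<in>A. \<phi> a \<le> \<phi> g" "\<exists>b\<in>A. \<forall>g\<in>A. \<phi> g \<le> \<phi> b"
  shows "\<phi> x \<in> {Inf (\<phi> ` A)..Sup (\<phi> ` A)}"
proof -
  have "bdd_below (\<phi> ` A)" "bdd_above (\<phi> ` A)"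
    using assms(2,3) by (auto simp: bdd_below_def bdd_above_def)
  then show ?thesis using assms(1) by (auto intro: cInf_lower cSup_upper)
qed

theorem lemmaB4:
  fixes M :: "'w measure" and S :: "'z measure" and P :: "'z measure"
    and Z :: "nat \<Rightarrow> 'w \<Rightarrow> 'z" and n :: nat
    and F :: "'f set" and L :: "'f \<Rightarrow> 'z \<Rightarrow> real" and fref f1 :: 'f
    and \<phi> :: "'f \<Rightarrow> real" and \<delta> B_ref :: real
  assumes "prob_space M"
    and n2: "n \<ge> 2"
    and rv: "\<And>i. i < n \<Longrightarrow> Z i \<in> measurable M S"
    and indep: "prob_space.indep_vars M (\<lambda>_. S) Z {..<n}"
    and ident: "\<And>i. i < n \<Longrightarrow> distr M S (Z i) = P"
    and fref: "fref \<in> F"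
    and L_nonneg: "\<And>f z. f \<in> F \<Longrightarrow> z \<in> space S \<Longrightarrow> L f z \<ge> 0"
    and L_meas: "\<And>f. f \<in> F \<Longrightarrow> L f \<in> borel_measurable S"
    and L_int: "\<And>f. f \<in> F \<Longrightarrow> integrable P (L f)"
    and delta: "0 < \<delta>" "\<delta> < 1"
    and f1: "f1 \<in> F" "f1 \<in> Rset F L P fref 0"
    and bound: "\<And>z. z \<in> space S \<Longrightarrow> \<bar>L f1 z - L fref z\<bar> \<le> B_ref"
    and attained: "\<And>w. w \<in> space M \<Longrightarrow>
       (\<exists>f\<in>Rhat F L n (\<lambda>i. Z i w) fref (2 * B_ref * sqrt (ln (1 / \<delta>) / (2 * real n))).
          \<forall>g\<in>Rhat F L n (\<lambda>i. Z i w) fref (2 * B_ref * sqrt (ln (1 / \<delta>) / (2 * real n))). \<phi> f \<le> \<phi> g)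
     \<and> (\<exists>f\<in>Rhat F L n (\<lambda>i. Z i w) fref (2 * B_ref * sqrt (ln (1 / \<delta>) / (2 * real n))).
          \<forall>g\<in>Rhat F L n (\<lambda>i. Z i w) fref (2 * B_ref * sqrt (ln (1 / \<delta>) / (2 * real n))). \<phi> g \<le> \<phi> f)"
    and event_meas: "{w \<in> space M.
        \<phi> f1 \<in> {Inf (\<phi> ` Rhat F L n (\<lambda>i. Z i w) fref (2 * B_ref * sqrt (ln (1 / \<delta>) / (2 * real n))))
                ..Sup (\<phi> ` Rhat F L n (\<lambda>i. Z i w) fref (2 * B_ref * sqrt (ln (1 / \<delta>) / (2 * real n))))}}
       \<in> sets M"
  shows "measure M {w \<in> space M.
        \<phi> f1 \<in> {Inf (\<phi> ` Rhat F L n (\<lambda>i. Z i w) fref (2 * B_ref * sqrt (ln (1 / \<delta>) / (2 * real n))))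
                ..Sup (\<phi> ` Rhat F L n (\<lambda>i. Z i w) fref (2 * B_ref * sqrt (ln (1 / \<delta>) / (2 * real n))))}}
       \<ge> 1 - \<delta>"
proof -
  interpret prob_space M by fact
  define e where "e = 2 * B_ref * sqrt (ln (1 / \<delta>) / (2 * real n))"
  define Bad where "Bad = {w \<in> space M. (\<Sum>i<n. L f1 (Z i w) - L fref (Z i w)) > real n * e}"
  define Good where "Good = {w \<in> space M. \<phi> f1 \<in> {Inf (\<phi> ` Rhat F L n (\<lambda>i. Z i w) fref e)
      ..Sup (\<phi> ` Rhat F L n (\<lambda>i. Z i w) fref e)}}"
  have "prob Bad \<le> \<delta>"
    unfolding Bad_def e_def
    using n2 f1 fref delta Rset_zero_integral_le[OF f1(2)]
    by (intro prob_sum_diff_gt_Hoeffding_level[OF _ rv indep ident] L_meas L_int bound) auto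
  moreover have "space M - Bad \<subseteq> Good"
  proof
    fix w assume w: "w \<in> space M - Bad"
    then have "f1 \<in> Rhat F L n (\<lambda>i. Z i w) fref e"
      using n2 f1(1) by (intro Rhat_memI) (auto simp: Bad_def)
    with w attained[of w] show "w \<in> Good"
      unfolding Good_def e_def by (blast intro: image_Inf_Sup_memI)
  qed
  moreover have "Bad \<in> events"
    unfolding Bad_def by (use rv L_meas f1(1) fref in measurable)
  moreover have "Good \<in> events"
    using event_meas by (simp add: Good_def e_def)
  ultimately have "1 - \<delta> \<le> prob Good"
    using prob_compl[of Bad] finite_measure_mono[of "space M - Bad" Good] by linarith
  then show ?thesis by (simp add: Good_def e_def)
qed

end
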